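(* Let $n\ge 2$ be an integer and let $e$ be the order of the element $b^{-n}a^{-n}(ab)^{n}$ in the Schur multiplier $M(R(2,n))$. If $G$ is any finite group of exponent $n$, then the exponent of $M(G)$ divides $ne$.
   Context: $R(2,n)$ denotes the largest finite $2$-generator group of exponent $n$, written as $R(2,n)=F/R$ with $F$ the free group on free generators $a,b$. For a group $G=F/R$ with $F$ free, the Schur multiplier is given by Hopf's formula $M(G)=(R\cap F')/[F,R]$, a subgroup of $F/[F,R]$. The element $b^{-n}a^{-n}(ab)^{n}[F,R]$ lies in $(R\cap F')/[F,R]=M(R(2,n))$ and $e$ is its order there. *)

theory Defs
  imports "HOL-Algebra.Algebra"
begin

text \<open>The exponent: the (unique) d such that x^m = 1 for all x iff d divides m
  (0 if there is no positive such m), in the same style as the library's ord.\<close>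
definition group_exponent :: "('a, 'b) monoid_scheme \<Rightarrow> nat" where
  "group_exponent G =
     (SOME d. \<forall>m::nat. (\<forall>x\<in>carrier G. x [^]\<^bsub>G\<^esub> m = \<one>\<^bsub>G\<^esub>) \<longleftrightarrow> d dvd m)"

text \<open>A letter (False, x) stands for the generator x, (True, x) for its inverse.\<close>
definition canceling :: "bool \<times> 'a \<Rightarrow> bool \<times> 'a \<Rightarrow> bool" where
  "canceling u v \<longleftrightarrow> snd u = snd v \<and> fst u \<noteq> fst v"

definition red_cons :: "bool \<times> 'a \<Rightarrow> (bool \<times> 'a) list \<Rightarrow> (bool \<times> 'a) list" where
  "red_cons u w = (case w of [] \<Rightarrow> [u] | v # w' \<Rightarrow> (if canceling u v then w' else u # w))"

definition reduce :: "(bool \<times> 'a) list \<Rightarrow> (bool \<times> 'a) list" where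
  "reduce w = foldr red_cons w []"

definition reduced :: "(bool \<times> 'a) list \<Rightarrow> bool" where
  "reduced w \<longleftrightarrow> (\<forall>i. Suc i < length w \<longrightarrow> \<not> canceling (w ! i) (w ! Suc i))"

definition free_group :: "'a set \<Rightarrow> ((bool \<times> 'a) list) monoid" where
  "free_group S = \<lparr> carrier = {w. reduced w \<and> snd ` set w \<subseteq> S},
                    monoid.mult = (\<lambda>u v. reduce (u @ v)),
                    one = [] \<rparr>"

definition gen :: "'a \<Rightarrow> (bool \<times> 'a) list" where
  "gen x = [(False, x)]"

definition free_lift ::
  "('g, 'c) monoid_scheme \<Rightarrow> ('a \<Rightarrow> 'g) \<Rightarrow> (bool \<times> 'a) list \<Rightarrow> 'g" where
  "free_lift G f w =
     foldr (\<lambda>u acc. (if fst u then inv\<^bsub>G\<^esub> (f (snd u)) else f (snd u)) \<otimes>\<^bsub>G\<^esub> acc) w \<one>\<^bsub>G\<^esub>"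

definition comm_subgroup :: "('a, 'b) monoid_scheme \<Rightarrow> 'a set \<Rightarrow> 'a set \<Rightarrow> 'a set" where
  "comm_subgroup F H K =
     generate F {inv\<^bsub>F\<^esub> h \<otimes>\<^bsub>F\<^esub> inv\<^bsub>F\<^esub> k \<otimes>\<^bsub>F\<^esub> h \<otimes>\<^bsub>F\<^esub> k | h k. h \<in> H \<and> k \<in> K}"

text \<open>Hopf's formula: for a presentation F/R, the group (R \<inter> F')/[F,R].\<close>
definition hopf_multiplier :: "('a, 'b) monoid_scheme \<Rightarrow> 'a set \<Rightarrow> 'a set monoid" where
  "hopf_multiplier F R =
     subgroup_generated F (R \<inter> derived F (carrier F)) Mod comm_subgroup F (carrier F) R"

definition schur_multiplier ::
  "('g, 'c) monoid_scheme \<Rightarrow> ((bool \<times> 'g) list) set monoid" where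
  "schur_multiplier G =
     hopf_multiplier (free_group (carrier G))
       (kernel (free_group (carrier G)) G (free_lift G id))"

abbreviation F2 :: "((bool \<times> bool) list) monoid" where
  "F2 \<equiv> free_group (UNIV :: bool set)"

abbreviation gen_a :: "(bool \<times> bool) list" where "gen_a \<equiv> gen False"
abbreviation gen_b :: "(bool \<times> bool) list" where "gen_b \<equiv> gen True"

text \<open>The relator subgroup R with R(2,n) = F2/R: intersection of all normal
  subgroups of finite index whose quotient has exponent dividing n.\<close>
definition burnside_R :: "nat \<Rightarrow> (bool \<times> bool) list set" where
  "burnside_R n = \<Inter> {N. N \<lhd> F2 \<and> finite (carrier (F2 Mod N)) \<and>
                          (\<forall>x\<in>carrier F2. x [^]\<^bsub>F2\<^esub> n \<in> N)}"

definition schur_e :: "nat \<Rightarrow> nat" where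
  "schur_e n =
     (let R = burnside_R n;
          w = inv\<^bsub>F2\<^esub> (gen_b [^]\<^bsub>F2\<^esub> n) \<otimes>\<^bsub>F2\<^esub> inv\<^bsub>F2\<^esub> (gen_a [^]\<^bsub>F2\<^esub> n)
                \<otimes>\<^bsub>F2\<^esub> (gen_a \<otimes>\<^bsub>F2\<^esub> gen_b) [^]\<^bsub>F2\<^esub> n
      in group.ord (hopf_multiplier F2 R) (comm_subgroup F2 (carrier F2) R #>\<^bsub>F2\<^esub> w))"

end

theory Submission
  imports Defs
begin

text \<open>
  Let \<open>G = F/R\<close> be finite of exponent \<open>n\<close> and work in \<open>Q = F/[F,R]\<close>, where \<open>R/[F,R]\<close> is
  central; in particular all \<open>n\<close>-th powers are central in \<open>Q\<close>. Sending the free generators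
  \<open>a, b\<close> of \<open>F\<^sub>2\<close> to arbitrary \<open>x, y \<in> F\<close> maps the relators of \<open>R(2,n)\<close> into \<open>R\<close>, since
  \<open>\<langle>x,y\<rangle>R/R\<close> is a finite group of exponent dividing \<open>n\<close>; hence it maps \<open>[F\<^sub>2,R\<^sub>2]\<close> into
  \<open>[F,R]\<close>, and the defect \<open>y\<^sup>-\<^sup>n x\<^sup>-\<^sup>n (xy)\<^sup>n\<close> has its \<open>e\<close>-th power in \<open>[F,R]\<close>.
  So in \<open>Q\<close> the defect of the \<open>n\<close>-th power map is central of exponent dividing \<open>e\<close>, which
  makes \<open>u \<mapsto> u\<^sup>n\<^sup>e\<close> an endomorphism of \<open>Q\<close> with abelian image. It therefore kills
  \<open>Q' \<supseteq> (R \<inter> F')/[F,R]\<close>.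
\<close>

section \<open>Free groups\<close>

lemma canceling_unique: "canceling u v \<Longrightarrow> canceling v w \<Longrightarrow> u = (w :: bool \<times> 'a)"
  unfolding canceling_def by (cases u; cases v; cases w) auto

lemma reduced_Nil [simp]: "reduced []"
  and reduced_singleton [simp]: "reduced [u]"
  unfolding reduced_def by auto

lemma reduced_Cons_Cons [simp]:
  "reduced (u # v # w) \<longleftrightarrow> \<not> canceling u v \<and> reduced (v # w)"
  unfolding reduced_def
proof safe
  fix i assume "\<forall>i. Suc i < length (u # v # w) \<longrightarrow> \<not> canceling ((u # v # w) ! i) ((u # v # w) ! Suc i)"
    and "Suc i < length (v # w)" "canceling ((v # w) ! i) ((v # w) ! Suc i)"
  then show False by (metis Suc_less_eq length_Cons nth_Cons_Suc)
next
  fix i assume "\<not> canceling u v" "\<forall>i. Suc i < length (v # w) \<longrightarrow> \<not> canceling ((v # w) ! i) ((v # w) ! Suc i)"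
    and "Suc i < length (u # v # w)" "canceling ((u # v # w) ! i) ((u # v # w) ! Suc i)"
  then show False by (cases i) auto
qed (auto dest: spec[of _ 0])

lemma reduced_ConsD: "reduced (u # w) \<Longrightarrow> reduced w"
  by (cases w) auto

lemma reduced_red_cons: "reduced w \<Longrightarrow> reduced (red_cons u w)"
  unfolding red_cons_def by (cases w) (auto dest: reduced_ConsD)

lemma reduced_foldr_red_cons: "reduced z \<Longrightarrow> reduced (foldr red_cons xs z)"
  by (induction xs) (auto intro: reduced_red_cons)

lemma reduced_reduce: "reduced (reduce w)"
  unfolding reduce_def by (rule reduced_foldr_red_cons) simp

lemma reduce_Cons: "reduce (u # w) = red_cons u (reduce w)"
  unfolding reduce_def by simp

lemma reduce_append: "reduce (u @ v) = foldr red_cons u (reduce v)"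
  unfolding reduce_def by simp

lemma reduce_reduced: "reduced w \<Longrightarrow> reduce w = w"
proof (induction w)
  case (Cons u w)
  then have "red_cons u w = u # w"
    unfolding red_cons_def by (cases w) auto
  with Cons show ?case by (simp add: reduce_Cons reduced_ConsD)
qed (simp add: reduce_def)

lemma red_cons_red_cons_canceling:
  assumes "reduced z" "canceling u v"
  shows "red_cons u (red_cons v z) = z"
proof (cases z)
  case (Cons v' z')
  show ?thesis
  proof (cases "canceling v v'")
    case True
    with assms have "u = v'" by (blast intro: canceling_unique)
    with assms Cons True show ?thesis by (cases z') (auto simp: red_cons_def)
  qed (use assms Cons in \<open>simp add: red_cons_def\<close>)
qed (use assms in \<open>simp add: red_cons_def\<close>)

lemma foldr_red_cons_reduce:
  "reduced z \<Longrightarrow> foldr red_cons (reduce u) z = foldr red_cons u z"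
proof (induction u)
  case (Cons x u)
  show ?case
  proof (cases "\<exists>y r. reduce u = y # r \<and> canceling x y")
    case True
    then obtain y r where y: "reduce u = y # r" "canceling x y" by blast
    have "foldr red_cons (reduce (x # u)) z = foldr red_cons r z"
      using y by (simp add: reduce_Cons red_cons_def)
    also have "\<dots> = red_cons x (red_cons y (foldr red_cons r z))"
      using red_cons_red_cons_canceling[OF reduced_foldr_red_cons[OF Cons.prems] y(2)] by simp
    finally show ?thesis using Cons y by simp
  next
    case False
    then have "red_cons x (reduce u) = x # reduce u"
      by (cases "reduce u") (auto simp: red_cons_def)
    then show ?thesis using Cons by (simp add: reduce_Cons)
  qed
qed (simp add: reduce_def)

lemma reduce_append_reduce_left: "reduce (reduce u @ v) = reduce (u @ v)"
  by (simp add: reduce_append foldr_red_cons_reduce reduced_reduce)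

lemma reduce_append_reduce_right: "reduce (u @ reduce v) = reduce (u @ v)"
  by (simp add: reduce_append reduce_reduced reduced_reduce)

definition word_inv :: "(bool \<times> 'a) list \<Rightarrow> (bool \<times> 'a) list" where
  "word_inv w = rev (map (\<lambda>(b, x). (\<not> b, x)) w)"

lemma word_inv_Cons: "word_inv (u # w) = word_inv w @ [(\<not> fst u, snd u)]"
  unfolding word_inv_def by (cases u) auto

lemma reduce_append_word_inv: "reduce (w @ word_inv w) = []"
proof -
  have "foldr red_cons (w @ word_inv w) z = z" if "reduced z" for z
    using that
  proof (induction w arbitrary: z)
    case (Cons u w)
    have "foldr red_cons ((u # w) @ word_inv (u # w)) z
        = red_cons u (foldr red_cons (w @ word_inv w) (red_cons (\<not> fst u, snd u) z))"
      by (simp add: word_inv_Cons)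
    also have "\<dots> = red_cons u (red_cons (\<not> fst u, snd u) z)"
      using Cons reduced_red_cons by metis
    also have "\<dots> = z"
      using red_cons_red_cons_canceling[OF Cons.prems] by (simp add: canceling_def)
    finally show ?case .
  qed (simp add: word_inv_def)
  then show ?thesis by (simp add: reduce_def)
qed

lemma letters_red_cons: "snd ` set (red_cons u w) \<subseteq> insert (snd u) (snd ` set w)"
  unfolding red_cons_def by (auto split: list.splits)

lemma letters_foldr_red_cons: "snd ` set (foldr red_cons xs z) \<subseteq> snd ` set xs \<union> snd ` set z"
proof (induction xs)
  case (Cons x xs)
  have "snd ` set (foldr red_cons (x # xs) z) \<subseteq> insert (snd x) (snd ` set (foldr red_cons xs z))"
    using letters_red_cons by simp
  also have "\<dots> \<subseteq> snd ` set (x # xs) \<union> snd ` set z"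
    using Cons.IH by auto
  finally show ?case .
qed simp

lemma letters_reduce: "snd ` set (reduce w) \<subseteq> snd ` set w"
  using letters_foldr_red_cons[of w "[]"] by (simp add: reduce_def)

lemma letters_word_inv: "snd ` set (word_inv w) = snd ` set w"
  unfolding word_inv_def by (simp add: image_image split_def)

lemma free_group_simps:
  "carrier (free_group S) = {w. reduced w \<and> snd ` set w \<subseteq> S}"
  "x \<otimes>\<^bsub>free_group S\<^esub> y = reduce (x @ y)"
  "\<one>\<^bsub>free_group S\<^esub> = []"
  unfolding free_group_def by auto

lemma reduce_in_free_group: "snd ` set w \<subseteq> S \<Longrightarrow> reduce w \<in> carrier (free_group S)"
  using letters_reduce[of w] reduced_reduce[of w] by (auto simp: free_group_simps)

lemma group_free_group: "group (free_group S)"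
proof (rule groupI)
  fix x y assume "x \<in> carrier (free_group S)" "y \<in> carrier (free_group S)"
  then show "x \<otimes>\<^bsub>free_group S\<^esub> y \<in> carrier (free_group S)"
    using reduce_in_free_group[of "x @ y" S] by (auto simp: free_group_simps)
next
  fix x y z
  show "x \<otimes>\<^bsub>free_group S\<^esub> y \<otimes>\<^bsub>free_group S\<^esub> z = x \<otimes>\<^bsub>free_group S\<^esub> (y \<otimes>\<^bsub>free_group S\<^esub> z)"
    by (simp add: free_group_simps reduce_append_reduce_left reduce_append_reduce_right)
next
  fix x assume x: "x \<in> carrier (free_group S)"
  then show "\<one>\<^bsub>free_group S\<^esub> \<otimes>\<^bsub>free_group S\<^esub> x = x"
    by (simp add: free_group_simps reduce_reduced)
  have "reduce (word_inv x) \<otimes>\<^bsub>free_group S\<^esub> x = \<one>\<^bsub>free_group S\<^esub>"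
    using reduce_append_word_inv[of "word_inv x"]
    by (simp add: free_group_simps reduce_append_reduce_left word_inv_def rev_map comp_def split_def)
  moreover have "reduce (word_inv x) \<in> carrier (free_group S)"
    using x by (intro reduce_in_free_group) (simp add: free_group_simps letters_word_inv)
  ultimately show "\<exists>y\<in>carrier (free_group S). y \<otimes>\<^bsub>free_group S\<^esub> x = \<one>\<^bsub>free_group S\<^esub>"
    by blast
qed (simp add: free_group_simps)

lemma gen_in_free_group: "x \<in> S \<Longrightarrow> gen x \<in> carrier (free_group S)"
  unfolding gen_def by (simp add: free_group_simps)

context
  fixes G :: "('g, 'c) monoid_scheme" and f :: "'a \<Rightarrow> 'g" and S :: "'a set"
  assumes G: "group G" and f: "f ` S \<subseteq> carrier G"
begin

interpretation group G by (rule G)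

definition letter_val :: "bool \<times> 'a \<Rightarrow> 'g" where
  "letter_val u = (if fst u then inv\<^bsub>G\<^esub> (f (snd u)) else f (snd u))"

lemma free_lift_Nil: "free_lift G f [] = \<one>\<^bsub>G\<^esub>"
  unfolding free_lift_def by simp

lemma free_lift_Cons: "free_lift G f (u # w) = letter_val u \<otimes>\<^bsub>G\<^esub> free_lift G f w"
  unfolding free_lift_def letter_val_def by simp

lemma letter_val_closed: "snd u \<in> S \<Longrightarrow> letter_val u \<in> carrier G"
  using f unfolding letter_val_def by auto

lemma free_lift_closed: "snd ` set w \<subseteq> S \<Longrightarrow> free_lift G f w \<in> carrier G"
  by (induction w) (auto simp: free_lift_Nil free_lift_Cons letter_val_closed)

lemma free_lift_append:
  "snd ` set u \<subseteq> S \<Longrightarrow> snd ` set v \<subseteq> S \<Longrightarrow>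
    free_lift G f (u @ v) = free_lift G f u \<otimes>\<^bsub>G\<^esub> free_lift G f v"
  by (induction u)
    (auto simp: free_lift_Nil free_lift_Cons free_lift_closed letter_val_closed m_assoc)

lemma free_lift_red_cons:
  assumes "snd ` set (u # w) \<subseteq> S"
  shows "free_lift G f (red_cons u w) = letter_val u \<otimes>\<^bsub>G\<^esub> free_lift G f w"
proof (cases w)
  case (Cons v w')
  show ?thesis
  proof (cases "canceling u v")
    case True
    then have "letter_val u \<otimes>\<^bsub>G\<^esub> letter_val v = \<one>\<^bsub>G\<^esub>"
      using assms f Cons unfolding canceling_def letter_val_def
      by (cases u; cases v) (auto split: if_splits)
    then have "letter_val u \<otimes>\<^bsub>G\<^esub> free_lift G f w = free_lift G f w'"
      using assms Cons
      by (simp add: free_lift_Cons free_lift_closed letter_val_closed flip: m_assoc)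
    with True Cons show ?thesis by (simp add: red_cons_def)
  qed (simp add: red_cons_def Cons free_lift_Cons)
qed (simp add: red_cons_def free_lift_Cons)

lemma free_lift_reduce: "snd ` set w \<subseteq> S \<Longrightarrow> free_lift G f (reduce w) = free_lift G f w"
proof (induction w)
  case (Cons u w)
  then have "snd ` set (u # reduce w) \<subseteq> S" using letters_reduce[of w] by auto
  with Cons show ?case by (simp add: reduce_Cons free_lift_red_cons free_lift_Cons)
qed (simp add: reduce_def)

lemma group_hom_free_lift: "group_hom (free_group S) G (free_lift G f)"
proof -
  have "free_lift G f \<in> hom (free_group S) G"
  proof (rule homI)
    fix x y assume "x \<in> carrier (free_group S)" "y \<in> carrier (free_group S)"
    then show "free_lift G f (x \<otimes>\<^bsub>free_group S\<^esub> y) = free_lift G f x \<otimes>\<^bsub>G\<^esub> free_lift G f y"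
      by (simp add: free_group_simps, subst free_lift_reduce) (auto simp: free_lift_append)
  qed (simp add: free_group_simps free_lift_closed)
  then show ?thesis
    by (simp add: group_free_group group_hom_axioms_def group_hom_def)
qed

end

lemma free_lift_gen: "group G \<Longrightarrow> f x \<in> carrier G \<Longrightarrow> free_lift G f (gen x) = f x"
  unfolding free_lift_def gen_def by (simp add: group.is_monoid monoid.r_one)

lemma (in group) group_exponent_dvd_iff:
  "group_exponent G dvd m \<longleftrightarrow> (\<forall>x\<in>carrier G. x [^] m = \<one>)"
proof -
  have "\<forall>m. (\<forall>x\<in>carrier G. x [^] m = \<one>) \<longleftrightarrow> Lcm (ord ` carrier G) dvd m"
    by (simp add: pow_eq_id Lcm_dvd_iff)
  then have "\<forall>m. (\<forall>x\<in>carrier G. x [^] m = \<one>) \<longleftrightarrow> group_exponent G dvd m"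
    unfolding group_exponent_def by (rule someI)
  then show ?thesis by blast
qed

definition center :: "('a, 'b) monoid_scheme \<Rightarrow> 'a set" where
  "center G = {z \<in> carrier G. \<forall>g\<in>carrier G. z \<otimes>\<^bsub>G\<^esub> g = g \<otimes>\<^bsub>G\<^esub> z}"

lemma (in group) center_commute: "z \<in> center G \<Longrightarrow> g \<in> carrier G \<Longrightarrow> z \<otimes> g = g \<otimes> z"
  unfolding center_def by blast

lemma (in group) subgroup_center: "subgroup (center G) G"
proof (rule subgroupI)
  fix z assume z: "z \<in> center G"
  then have zc: "z \<in> carrier G" by (simp add: center_def)
  have "inv z \<otimes> g = g \<otimes> inv z" if g: "g \<in> carrier G" for g
  proof -
    have "inv z \<otimes> g = inv (inv g \<otimes> z)"
      using zc g by (simp add: inv_mult_group)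
    also have "inv g \<otimes> z = z \<otimes> inv g"
      using center_commute[OF z, of "inv g"] g by simp
    also have "inv (z \<otimes> inv g) = g \<otimes> inv z"
      using zc g by (simp add: inv_mult_group)
    finally show ?thesis .
  qed
  with zc show "inv z \<in> center G" unfolding center_def by blast
next
  fix z w assume z: "z \<in> center G" and w: "w \<in> center G"
  then have zc: "z \<in> carrier G" and wc: "w \<in> carrier G" by (simp_all add: center_def)
  have "z \<otimes> w \<otimes> g = g \<otimes> (z \<otimes> w)" if g: "g \<in> carrier G" for g
  proof -
    have "z \<otimes> w \<otimes> g = z \<otimes> (g \<otimes> w)"
      using zc wc g center_commute[OF w g] by (simp add: m_assoc)
    also have "\<dots> = g \<otimes> (z \<otimes> w)"
      using zc wc g center_commute[OF z g] by (simp flip: m_assoc)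
    finally show ?thesis .
  qed
  with zc wc show "z \<otimes> w \<in> center G" unfolding center_def by blast
qed (auto simp: center_def)

lemma (in group) commutator_eq_one_iff:
  assumes "a \<in> carrier G" "b \<in> carrier G"
  shows "inv a \<otimes> inv b \<otimes> a \<otimes> b = \<one> \<longleftrightarrow> a \<otimes> b = b \<otimes> a"
proof -
  have "inv a \<otimes> inv b \<otimes> a \<otimes> b = inv (b \<otimes> a) \<otimes> (a \<otimes> b)"
    using assms by (simp add: inv_mult_group m_assoc)
  then show ?thesis
    using assms by (simp add: inv_solve_left')
qed

lemma (in normal) group_hom_rcos: "group_hom G (G Mod H) (\<lambda>a. H #> a)"
  unfolding group_hom_def group_hom_axioms_def
  using is_group factorgroup_is_group r_coset_hom_Mod by blast

lemma (in normal) rcos_eq_self_iff: "x \<in> carrier G \<Longrightarrow> H #> x = H \<longleftrightarrow> x \<in> H"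
  using coset_join1[OF _ _ subgroup_axioms] coset_join2[OF _ subgroup_axioms] by blast

lemma (in group) normal_Inter:
  assumes "A \<noteq> {}" and normal: "\<And>N. N \<in> A \<Longrightarrow> N \<lhd> G"
  shows "\<Inter>A \<lhd> G"
proof -
  have "subgroup (\<Inter>A) G"
    using assms normal_imp_subgroup by (intro subgroups_Inter) auto
  moreover have "x \<otimes> h \<otimes> inv x \<in> \<Inter>A" if "x \<in> carrier G" "h \<in> \<Inter>A" for x h
    using that normal.inv_op_closed2[OF normal] by blast
  ultimately show ?thesis
    unfolding normal_inv_iff by blast
qed

lemma (in group_hom) finite_FactGroup_kernel:
  "finite (carrier H) \<Longrightarrow> finite (carrier (G Mod kernel G H h))"
  by (rule inj_on_finite[OF FactGroup_inj_on]) (auto intro: FactGroup_the_elem_mem)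

lemma r_coset_subgroup_generated: "r_coset (subgroup_generated G S) K x = K #>\<^bsub>G\<^esub> x"
  by (simp add: r_coset_def)

lemma (in group_hom) derived_subset_kernel:
  assumes "\<And>x y. x \<in> carrier G \<Longrightarrow> y \<in> carrier G \<Longrightarrow> h x \<otimes>\<^bsub>H\<^esub> h y = h y \<otimes>\<^bsub>H\<^esub> h x"
  shows "derived G (carrier G) \<subseteq> kernel G H h"
  unfolding derived_def
proof (rule G.generate_subgroup_incl[OF _ subgroup_kernel], clarify)
  fix x y assume x: "x \<in> carrier G" and y: "y \<in> carrier G"
  have "h (x \<otimes> y \<otimes> inv x \<otimes> inv y) = h x \<otimes>\<^bsub>H\<^esub> h y \<otimes>\<^bsub>H\<^esub> inv\<^bsub>H\<^esub> h x \<otimes>\<^bsub>H\<^esub> inv\<^bsub>H\<^esub> h y"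
    using x y by simp
  also have "h x \<otimes>\<^bsub>H\<^esub> h y = h y \<otimes>\<^bsub>H\<^esub> h x"
    using assms x y .
  also have "h y \<otimes>\<^bsub>H\<^esub> h x \<otimes>\<^bsub>H\<^esub> inv\<^bsub>H\<^esub> h x \<otimes>\<^bsub>H\<^esub> inv\<^bsub>H\<^esub> h y = \<one>\<^bsub>H\<^esub>"
    using x y by (simp add: H.m_assoc)
  finally show "x \<otimes> y \<otimes> inv x \<otimes> inv y \<in> kernel G H h"
    using x y by (simp add: kernel_def)
qed

section \<open>Power maps with central defect\<close>

definition pow_defect :: "('a, 'b) monoid_scheme \<Rightarrow> nat \<Rightarrow> 'a \<Rightarrow> 'a \<Rightarrow> 'a" where
  "pow_defect G n x y =
     inv\<^bsub>G\<^esub> (y [^]\<^bsub>G\<^esub> n) \<otimes>\<^bsub>G\<^esub> inv\<^bsub>G\<^esub> (x [^]\<^bsub>G\<^esub> n) \<otimes>\<^bsub>G\<^esub> (x \<otimes>\<^bsub>G\<^esub> y) [^]\<^bsub>G\<^esub> n"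

lemma (in group) pow_defect_closed [simp]:
  "x \<in> carrier G \<Longrightarrow> y \<in> carrier G \<Longrightarrow> pow_defect G n x y \<in> carrier G"
  unfolding pow_defect_def by simp

lemma (in group) nat_pow_mult_pow_defect:
  assumes "x \<in> carrier G" "y \<in> carrier G"
  shows "(x \<otimes> y) [^] n = x [^] n \<otimes> y [^] n \<otimes> pow_defect G n x y"
proof -
  have "pow_defect G n x y = inv (x [^] n \<otimes> y [^] n) \<otimes> (x \<otimes> y) [^] n"
    using assms by (simp add: pow_defect_def inv_mult_group)
  then show ?thesis
    using assms by (simp flip: m_assoc)
qed

lemma (in comm_group) pow_defect_eq_one:
  "x \<in> carrier G \<Longrightarrow> y \<in> carrier G \<Longrightarrow> pow_defect G n x y = \<one>"
  unfolding pow_defect_def by (simp add: pow_mult_distrib m_comm inv_solve_left' flip: inv_mult_group)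

lemma (in group_hom) hom_pow_defect:
  "x \<in> carrier G \<Longrightarrow> y \<in> carrier G \<Longrightarrow> h (pow_defect G n x y) = pow_defect H n (h x) (h y)"
  unfolding pow_defect_def by (simp add: hom_nat_pow)

lemma (in group) pow_defect_in_derived:
  assumes "x \<in> carrier G" "y \<in> carrier G"
  shows "pow_defect G n x y \<in> derived G (carrier G)"
proof -
  let ?D = "derived G (carrier G)"
  interpret D: normal ?D G by (rule derived_self_is_normal)
  interpret Q: comm_group "G Mod ?D" by (rule derived_quot_is_comm_group)
  have p: "group_hom G (G Mod ?D) (\<lambda>a. ?D #> a)"
    by (rule D.group_hom_rcos)
  have "?D #> pow_defect G n x y = pow_defect (G Mod ?D) n (?D #> x) (?D #> y)"
    using group_hom.hom_pow_defect[OF p assms] .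
  also have "\<dots> = \<one>\<^bsub>G Mod ?D\<^esub>"
    using assms group_hom.hom_closed[OF p] by (intro Q.pow_defect_eq_one) auto
  finally show ?thesis
    using assms by (simp add: D.rcos_eq_self_iff)
qed

lemma (in group) group_hom_nat_pow_of_central_pow_defect:
  assumes central: "\<And>x. x \<in> carrier G \<Longrightarrow> x [^] n \<in> center G"
    and defect: "\<And>x y. x \<in> carrier G \<Longrightarrow> y \<in> carrier G \<Longrightarrow> pow_defect G n x y [^] m = \<one>"
  shows "group_hom G G (\<lambda>x. x [^] (n * m))"
proof -
  have "(x \<otimes> y) [^] (n * m) = x [^] (n * m) \<otimes> y [^] (n * m)"
    if x: "x \<in> carrier G" and y: "y \<in> carrier G" for x y
  proof -
    let ?d = "pow_defect G n x y"
    have "?d \<in> center G"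
      unfolding pow_defect_def using x y central subgroup_center
      by (intro subgroup.m_closed subgroup.m_inv_closed) auto
    then have d_commute: "x [^] n \<otimes> y [^] n \<otimes> ?d = ?d \<otimes> (x [^] n \<otimes> y [^] n)"
      using x y by (intro center_commute[THEN sym]) simp_all
    have xy_commute: "x [^] n \<otimes> y [^] n = y [^] n \<otimes> x [^] n"
      using x y central by (intro center_commute) simp_all
    have "(x \<otimes> y) [^] (n * m) = ((x \<otimes> y) [^] n) [^] m"
      using x y by (simp add: nat_pow_pow)
    also have "\<dots> = (x [^] n \<otimes> y [^] n \<otimes> ?d) [^] m"
      using x y by (simp only: nat_pow_mult_pow_defect)
    also have "\<dots> = (x [^] n \<otimes> y [^] n) [^] m \<otimes> ?d [^] m"
      using x y d_commute by (intro pow_mult_distrib) simp_all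
    also have "\<dots> = (x [^] n \<otimes> y [^] n) [^] m"
      using x y defect by simp
    also have "\<dots> = (x [^] n) [^] m \<otimes> (y [^] n) [^] m"
      using x y by (intro pow_mult_distrib[OF xy_commute]) simp_all
    finally show ?thesis
      using x y by (simp add: nat_pow_pow)
  qed
  then have "(\<lambda>x. x [^] (n * m)) \<in> hom G G"
    by (intro homI) simp_all
  then show ?thesis
    by (simp add: group_hom_def group_hom_axioms_def is_group)
qed

lemma (in group) derived_nat_pow_eq_one:
  assumes central: "\<And>x. x \<in> carrier G \<Longrightarrow> x [^] n \<in> center G"
    and defect: "\<And>x y. x \<in> carrier G \<Longrightarrow> y \<in> carrier G \<Longrightarrow> pow_defect G n x y [^] m = \<one>"
    and x: "x \<in> derived G (carrier G)"
  shows "x [^] (n * m) = \<one>"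
proof -
  have hom: "group_hom G G (\<lambda>x. x [^] (n * m))"
    using central defect by (rule group_hom_nat_pow_of_central_pow_defect)
  have "a [^] (n * m) \<otimes> b [^] (n * m) = b [^] (n * m) \<otimes> a [^] (n * m)"
    if a: "a \<in> carrier G" and b: "b \<in> carrier G" for a b
  proof -
    have "(a [^] n) [^] m \<otimes> b [^] (n * m) = b [^] (n * m) \<otimes> (a [^] n) [^] m"
      using center_commute[OF central[OF a], of "b [^] (n * m)"] a b
      by (intro group_commutes_pow[where x = "a [^] n" and n = m]) auto
    then show ?thesis using a by (simp only: nat_pow_pow)
  qed
  then have "derived G (carrier G) \<subseteq> kernel G G (\<lambda>x. x [^] (n * m))"
    by (rule group_hom.derived_subset_kernel[OF hom])
  with x show ?thesis by (auto simp: kernel_def)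
qed

section \<open>The commutator subgroup \<open>[G,H]\<close> and Hopf's formula\<close>

lemma (in group) comm_generators_subset:
  "A \<subseteq> carrier G \<Longrightarrow> {inv h \<otimes> inv k \<otimes> h \<otimes> k | h k. h \<in> carrier G \<and> k \<in> A} \<subseteq> carrier G"
  by auto

lemma (in group_hom) comm_subgroup_image_subset:
  assumes "A \<subseteq> carrier G" "h ` A \<subseteq> B"
  shows "h ` comm_subgroup G (carrier G) A \<subseteq> comm_subgroup H (carrier H) B"
proof -
  let ?X = "{inv h \<otimes> inv k \<otimes> h \<otimes> k | h k. h \<in> carrier G \<and> k \<in> A}"
  let ?Y = "{inv\<^bsub>H\<^esub> h \<otimes>\<^bsub>H\<^esub> inv\<^bsub>H\<^esub> k \<otimes>\<^bsub>H\<^esub> h \<otimes>\<^bsub>H\<^esub> k | h k. h \<in> carrier H \<and> k \<in> B}"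
  have "h ` ?X \<subseteq> ?Y"
  proof (rule image_subsetI)
    fix z assume "z \<in> ?X"
    then obtain x k where x: "x \<in> carrier G" and k: "k \<in> A" and z: "z = inv x \<otimes> inv k \<otimes> x \<otimes> k"
      by blast
    from k assms have "k \<in> carrier G" "h k \<in> B" by auto
    with x have "h (inv x \<otimes> inv k \<otimes> x \<otimes> k) = inv\<^bsub>H\<^esub> h x \<otimes>\<^bsub>H\<^esub> inv\<^bsub>H\<^esub> h k \<otimes>\<^bsub>H\<^esub> h x \<otimes>\<^bsub>H\<^esub> h k"
      by simp
    with x \<open>h k \<in> B\<close> show "h z \<in> ?Y"
      unfolding z by (blast intro: hom_closed)
  qed
  then have "generate H (h ` ?X) \<subseteq> generate H ?Y"
    by (rule H.mono_generate)
  then show ?thesis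
    unfolding comm_subgroup_def
    using generate_img[OF G.comm_generators_subset[OF assms(1)]] by simp
qed

context normal
begin

abbreviation comm_GH :: "'a set" where
  "comm_GH \<equiv> comm_subgroup G (carrier G) H"

lemma normal_comm_GH: "comm_GH \<lhd> G"
  unfolding comm_subgroup_def
proof (rule normal_generateI)
  show "{inv h \<otimes> inv k \<otimes> h \<otimes> k |h k. h \<in> carrier G \<and> k \<in> H} \<subseteq> carrier G"
    using comm_generators_subset[OF subset] .
next
  fix z g assume "z \<in> {inv h \<otimes> inv k \<otimes> h \<otimes> k |h k. h \<in> carrier G \<and> k \<in> H}" and g: "g \<in> carrier G"
  then obtain h k where h: "h \<in> carrier G" and k: "k \<in> H" and z: "z = inv h \<otimes> inv k \<otimes> h \<otimes> k"
    by blast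
  have cancel: "inv x \<otimes> (x \<otimes> y) = y" if "x \<in> carrier G" "y \<in> carrier G" for x y
    using that by (simp flip: m_assoc)
  have "g \<otimes> z \<otimes> inv g
      = inv (g \<otimes> h \<otimes> inv g) \<otimes> inv (g \<otimes> k \<otimes> inv g) \<otimes> (g \<otimes> h \<otimes> inv g) \<otimes> (g \<otimes> k \<otimes> inv g)"
    using g h k unfolding z by (simp add: inv_mult_group m_assoc cancel)
  moreover have "g \<otimes> k \<otimes> inv g \<in> H"
    using g k by (rule inv_op_closed2)
  ultimately show "g \<otimes> z \<otimes> inv g \<in> {inv h \<otimes> inv k \<otimes> h \<otimes> k |h k. h \<in> carrier G \<and> k \<in> H}"
    using g h by blast
qed

lemma subgroup_Int_derived: "subgroup (H \<inter> derived G (carrier G)) G"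
  by (intro subgroups_Inter_pair subgroup_axioms derived_is_subgroup) simp

lemma comm_GH_subset: "comm_GH \<subseteq> H \<inter> derived G (carrier G)"
  unfolding comm_subgroup_def
proof (rule generate_subgroup_incl[OF _ subgroup_Int_derived], clarify)
  fix h k assume h: "h \<in> carrier G" and k: "k \<in> H"
  then have kc: "k \<in> carrier G" by auto
  have "inv h \<otimes> inv k \<otimes> inv (inv h) \<in> H"
    using h k by (intro inv_op_closed2) auto
  with h k kc have "inv h \<otimes> inv k \<otimes> h \<otimes> k \<in> H"
    by simp
  moreover have "inv h \<otimes> inv k \<otimes> inv (inv h) \<otimes> inv (inv k) \<in> derived_set G (carrier G)"
    using h kc by (intro UN_I[of "inv h"] UN_I[of "inv k"]) auto
  then have "inv h \<otimes> inv k \<otimes> h \<otimes> k \<in> derived G (carrier G)"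
    using h kc unfolding derived_def by (simp add: generate.incl)
  ultimately show "inv h \<otimes> inv k \<otimes> h \<otimes> k \<in> H \<inter> derived G (carrier G)"
    by blast
qed

lemma rcos_comm_GH_in_center:
  assumes "k \<in> H"
  shows "comm_GH #> k \<in> center (G Mod comm_GH)"
proof -
  have K: "comm_GH \<lhd> G" by (rule normal_comm_GH)
  have Q: "group (G Mod comm_GH)" by (rule normal.factorgroup_is_group[OF K])
  have p: "group_hom G (G Mod comm_GH) (\<lambda>a. comm_GH #> a)" by (rule normal.group_hom_rcos[OF K])
  have kc: "k \<in> carrier G" using assms subset by blast
  have "(comm_GH #> k) \<otimes>\<^bsub>G Mod comm_GH\<^esub> (comm_GH #> g) = (comm_GH #> g) \<otimes>\<^bsub>G Mod comm_GH\<^esub> (comm_GH #> k)"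
    if g: "g \<in> carrier G" for g
  proof -
    have "inv g \<otimes> inv k \<otimes> g \<otimes> k \<in> comm_GH"
      unfolding comm_subgroup_def using g assms by (intro generate.incl) blast
    then have "comm_GH #> (inv g \<otimes> inv k \<otimes> g \<otimes> k) = \<one>\<^bsub>G Mod comm_GH\<^esub>"
      using g kc by (simp add: normal.rcos_eq_self_iff[OF K])
    moreover have "comm_GH #> (inv g \<otimes> inv k \<otimes> g \<otimes> k) =
        inv\<^bsub>G Mod comm_GH\<^esub> (comm_GH #> g) \<otimes>\<^bsub>G Mod comm_GH\<^esub> inv\<^bsub>G Mod comm_GH\<^esub> (comm_GH #> k)
          \<otimes>\<^bsub>G Mod comm_GH\<^esub> (comm_GH #> g) \<otimes>\<^bsub>G Mod comm_GH\<^esub> (comm_GH #> k)"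
      using g kc by (simp only: group_hom.hom_mult[OF p] group_hom.hom_inv[OF p] inv_closed m_closed)
    ultimately show ?thesis
      using g kc group_hom.hom_closed[OF p] by (simp only: group.commutator_eq_one_iff[OF Q])
  qed
  then show ?thesis
    unfolding center_def carrier_FactGroup using kc group_hom.hom_closed[OF p] by auto
qed

lemma normal_comm_GH_subgroup_generated:
  "comm_GH \<lhd> subgroup_generated G (H \<inter> derived G (carrier G))"
proof -
  have "subgroup_generated G (H \<inter> derived G (carrier G)) = G\<lparr>carrier := H \<inter> derived G (carrier G)\<rparr>"
    using subgroup.carrier_subgroup_generated_subgroup[OF subgroup_Int_derived]
    unfolding subgroup_generated_def by simp
  then show ?thesis
    using normal_restrict_supergroup[OF subgroup_Int_derived normal_comm_GH comm_GH_subset] by simp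
qed

lemma group_hopf_multiplier: "group (hopf_multiplier G H)"
  unfolding hopf_multiplier_def
  by (rule normal.factorgroup_is_group[OF normal_comm_GH_subgroup_generated])

lemma carrier_hopf_multiplier:
  "carrier (hopf_multiplier G H) = (\<lambda>x. comm_GH #> x) ` (H \<inter> derived G (carrier G))"
  unfolding hopf_multiplier_def carrier_FactGroup r_coset_subgroup_generated
  using subgroup.carrier_subgroup_generated_subgroup[OF subgroup_Int_derived] by simp

lemma hopf_multiplier_pow_eq_one_iff:
  assumes x: "x \<in> H \<inter> derived G (carrier G)"
  shows "(comm_GH #> x) [^]\<^bsub>hopf_multiplier G H\<^esub> (k::nat) = \<one>\<^bsub>hopf_multiplier G H\<^esub>
    \<longleftrightarrow> x [^] k \<in> comm_GH"
proof -
  let ?S = "subgroup_generated G (H \<inter> derived G (carrier G))"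
  have carrier_S: "carrier ?S = H \<inter> derived G (carrier G)"
    by (rule subgroup.carrier_subgroup_generated_subgroup[OF subgroup_Int_derived])
  have K: "comm_GH \<lhd> ?S" by (rule normal_comm_GH_subgroup_generated)
  have xS: "x \<in> carrier ?S" using x carrier_S by simp
  have pow_S: "x [^]\<^bsub>?S\<^esub> k = x [^] k"
    by (simp add: pow_subgroup_generated)
  have xk: "x [^] k \<in> carrier ?S"
    using monoid.nat_pow_closed[OF group.is_monoid[OF normal.axioms(2)[OF K]] xS, of k] unfolding pow_S .
  have "(comm_GH #> x) [^]\<^bsub>hopf_multiplier G H\<^esub> k = comm_GH #>\<^bsub>?S\<^esub> (x [^] k)"
    using group_hom.hom_nat_pow[OF normal.group_hom_rcos[OF K] xS, of k]
    unfolding hopf_multiplier_def pow_S r_coset_subgroup_generated by simp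
  then show ?thesis
    using normal.rcos_eq_self_iff[OF K xk] unfolding hopf_multiplier_def by simp
qed

lemma nat_pow_in_center_FactGroup_comm_GH:
  assumes "\<And>x. x \<in> carrier G \<Longrightarrow> x [^] (n::nat) \<in> H" and "U \<in> carrier (G Mod comm_GH)"
  shows "U [^]\<^bsub>G Mod comm_GH\<^esub> n \<in> center (G Mod comm_GH)"
proof -
  from assms(2) obtain x where x: "x \<in> carrier G" and U: "U = comm_GH #> x"
    unfolding carrier_FactGroup by blast
  show ?thesis
    using rcos_comm_GH_in_center[OF assms(1)[OF x]]
      group_hom.hom_nat_pow[OF normal.group_hom_rcos[OF normal_comm_GH] x, of n]
    unfolding U by simp
qed

lemma derived_nat_pow_in_comm_GH:
  assumes pow: "\<And>x. x \<in> carrier G \<Longrightarrow> x [^] n \<in> H"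
    and defect: "\<And>x y. x \<in> carrier G \<Longrightarrow> y \<in> carrier G \<Longrightarrow> pow_defect G n x y [^] m \<in> comm_GH"
    and r: "r \<in> derived G (carrier G)"
  shows "r [^] (n * m) \<in> comm_GH"
proof -
  let ?Q = "G Mod comm_GH" and ?p = "\<lambda>a. comm_GH #> a"
  have K: "comm_GH \<lhd> G" by (rule normal_comm_GH)
  have p: "group_hom G ?Q ?p" by (rule normal.group_hom_rcos[OF K])
  have defect_Q: "pow_defect ?Q n U V [^]\<^bsub>?Q\<^esub> m = \<one>\<^bsub>?Q\<^esub>"
    if "U \<in> carrier ?Q" "V \<in> carrier ?Q" for U V
  proof -
    from that obtain x y where x: "x \<in> carrier G" and U: "U = ?p x"
      and y: "y \<in> carrier G" and V: "V = ?p y"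
      unfolding carrier_FactGroup by blast
    have "pow_defect ?Q n U V [^]\<^bsub>?Q\<^esub> m = ?p (pow_defect G n x y [^] m)"
      unfolding U V using x y
      by (simp add: group_hom.hom_nat_pow[OF p] group_hom.hom_pow_defect[OF p])
    then show ?thesis
      using defect[OF x y] x y by (simp add: normal.rcos_eq_self_iff[OF K])
  qed
  have "?p r \<in> derived ?Q (?p ` carrier G)"
    using r group_hom.derived_img[OF p, of "carrier G"] by simp
  then have "?p r [^]\<^bsub>?Q\<^esub> (n * m) = \<one>\<^bsub>?Q\<^esub>"
    unfolding carrier_FactGroup[symmetric]
    using group.derived_nat_pow_eq_one[OF normal.factorgroup_is_group[OF K]
        nat_pow_in_center_FactGroup_comm_GH[OF pow] defect_Q]
    by blast
  moreover have "r \<in> carrier G"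
    using r derived_in_carrier by blast
  ultimately show ?thesis
    by (simp add: group_hom.hom_nat_pow[OF p, symmetric] normal.rcos_eq_self_iff[OF K])
qed

theorem group_exponent_hopf_multiplier_dvd:
  assumes "\<And>x. x \<in> carrier G \<Longrightarrow> x [^] n \<in> H"
    and "\<And>x y. x \<in> carrier G \<Longrightarrow> y \<in> carrier G \<Longrightarrow> pow_defect G n x y [^] m \<in> comm_GH"
  shows "group_exponent (hopf_multiplier G H) dvd n * m"
  unfolding group.group_exponent_dvd_iff[OF group_hopf_multiplier] carrier_hopf_multiplier
  using hopf_multiplier_pow_eq_one_iff derived_nat_pow_in_comm_GH[OF assms] by blast

end

section \<open>The relators of \<open>R(2,n)\<close>\<close>

interpretation F2: group F2
  by (rule group_free_group)

lemma normal_burnside_R: "burnside_R n \<lhd> F2"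
  unfolding burnside_R_def
proof (rule F2.normal_Inter)
  have "carrier (F2 Mod carrier F2) = (\<lambda>x. carrier F2) ` carrier F2"
    using F2.coset_join2[OF _ F2.subgroup_self] unfolding carrier_FactGroup by (intro image_cong) auto
  also have "\<dots> = {carrier F2}"
    using F2.one_closed by blast
  finally have "carrier F2 \<in> {N. N \<lhd> F2 \<and> finite (carrier (F2 Mod N)) \<and> (\<forall>x\<in>carrier F2. x [^]\<^bsub>F2\<^esub> n \<in> N)}"
    using F2.normal_self by simp
  then show "{N. N \<lhd> F2 \<and> finite (carrier (F2 Mod N)) \<and> (\<forall>x\<in>carrier F2. x [^]\<^bsub>F2\<^esub> n \<in> N)} \<noteq> {}"
    by blast
qed blast

lemma nat_pow_in_burnside_R: "x \<in> carrier F2 \<Longrightarrow> x [^]\<^bsub>F2\<^esub> n \<in> burnside_R n"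
  unfolding burnside_R_def by blast

lemma burnside_R_subset_kernel:
  assumes h: "group_hom F2 H h" and fin: "finite (carrier H)"
    and exp: "\<And>g. g \<in> carrier H \<Longrightarrow> g [^]\<^bsub>H\<^esub> n = \<one>\<^bsub>H\<^esub>"
  shows "burnside_R n \<subseteq> kernel F2 H h"
proof -
  have "x [^]\<^bsub>F2\<^esub> n \<in> kernel F2 H h" if "x \<in> carrier F2" for x
    using that exp group_hom.hom_closed[OF h]
    by (simp add: kernel_def group_hom.hom_nat_pow[OF h])
  then show ?thesis
    unfolding burnside_R_def
    using group_hom.normal_kernel[OF h] group_hom.finite_FactGroup_kernel[OF h fin] by blast
qed

lemma pow_defect_gens_pow_schur_e_in_comm_subgroup:
  "pow_defect F2 n gen_a gen_b [^]\<^bsub>F2\<^esub> schur_e n \<in> comm_subgroup F2 (carrier F2) (burnside_R n)"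
proof -
  interpret R: normal "burnside_R n" F2 by (rule normal_burnside_R)
  let ?w = "pow_defect F2 n gen_a gen_b"
  have ab: "gen_a \<in> carrier F2" "gen_b \<in> carrier F2"
    by (simp_all add: gen_in_free_group)
  have "?w \<in> burnside_R n"
    unfolding pow_defect_def using ab
    by (intro R.m_closed R.m_inv_closed nat_pow_in_burnside_R F2.m_closed)
  moreover have "?w \<in> derived F2 (carrier F2)"
    using ab by (rule F2.pow_defect_in_derived)
  ultimately have w: "?w \<in> burnside_R n \<inter> derived F2 (carrier F2)" ..
  have "R.comm_GH #>\<^bsub>F2\<^esub> ?w \<in> carrier (hopf_multiplier F2 (burnside_R n))"
    using w by (simp add: R.carrier_hopf_multiplier)
  then have "(R.comm_GH #>\<^bsub>F2\<^esub> ?w) [^]\<^bsub>hopf_multiplier F2 (burnside_R n)\<^esub> schur_e n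
      = \<one>\<^bsub>hopf_multiplier F2 (burnside_R n)\<^esub>"
    unfolding schur_e_def Let_def pow_defect_def[symmetric]
    by (rule group.pow_ord_eq_1[OF R.group_hopf_multiplier])
  then show ?thesis
    using R.hopf_multiplier_pow_eq_one_iff[OF w] by blast
qed

lemma (in group_hom) pow_defect_pow_schur_e_in_comm_subgroup_kernel:
  assumes fin: "finite (carrier H)" and exp: "\<And>g. g \<in> carrier H \<Longrightarrow> g [^]\<^bsub>H\<^esub> n = \<one>\<^bsub>H\<^esub>"
    and x: "x \<in> carrier G" and y: "y \<in> carrier G"
  shows "pow_defect G n x y [^] schur_e n \<in> comm_subgroup G (carrier G) (kernel G H h)"
proof -
  define \<phi> where "\<phi> = free_lift G (\<lambda>b. if b then y else x)"
  have \<phi>: "group_hom F2 G \<phi>"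
    unfolding \<phi>_def using x y by (intro group_hom_free_lift) auto
  have \<phi>_gen: "\<phi> gen_a = x" "\<phi> gen_b = y"
    unfolding \<phi>_def using x y by (simp_all add: free_lift_gen G.is_group)
  have "group_hom F2 H (h \<circ> \<phi>)"
    using Group.hom_compose[OF group_hom.homh[OF \<phi>] homh]
    by (simp add: group_hom_def group_hom_axioms_def F2.is_group H.is_group)
  then have "burnside_R n \<subseteq> kernel F2 H (h \<circ> \<phi>)"
    using fin exp by (rule burnside_R_subset_kernel)
  then have "\<phi> ` burnside_R n \<subseteq> kernel G H h"
    using group_hom.hom_closed[OF \<phi>] by (auto simp: kernel_def)
  then have "\<phi> ` comm_subgroup F2 (carrier F2) (burnside_R n) \<subseteq> comm_subgroup G (carrier G) (kernel G H h)"
    using subgroup.subset[OF normal_imp_subgroup[OF normal_burnside_R]] by (intro group_hom.comm_subgroup_image_subset[OF \<phi>])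
  then have "\<phi> (pow_defect F2 n gen_a gen_b [^]\<^bsub>F2\<^esub> schur_e n) \<in> comm_subgroup G (carrier G) (kernel G H h)"
    using pow_defect_gens_pow_schur_e_in_comm_subgroup by blast
  moreover have "gen_a \<in> carrier F2" "gen_b \<in> carrier F2"
    by (simp_all add: gen_in_free_group)
  ultimately show ?thesis
    by (simp add: group_hom.hom_nat_pow[OF \<phi>] group_hom.hom_pow_defect[OF \<phi>] \<phi>_gen)
qed

theorem (in group_hom) group_exponent_hopf_multiplier_kernel_dvd:
  assumes "finite (carrier H)" and "\<And>g. g \<in> carrier H \<Longrightarrow> g [^]\<^bsub>H\<^esub> n = \<one>\<^bsub>H\<^esub>"
  shows "group_exponent (hopf_multiplier G (kernel G H h)) dvd n * schur_e n"
proof -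
  interpret R: normal "kernel G H h" G by (rule normal_kernel)
  show ?thesis
  proof (rule R.group_exponent_hopf_multiplier_dvd)
    fix x assume x: "x \<in> carrier G"
    have "h (x [^] n) = \<one>\<^bsub>H\<^esub>"
      by (simp only: hom_nat_pow[OF x] assms(2)[OF hom_closed[OF x]])
    with x show "x [^] n \<in> kernel G H h"
      unfolding kernel_def by blast
  next
    fix x y assume "x \<in> carrier G" "y \<in> carrier G"
    with assms show "pow_defect G n x y [^] schur_e n \<in> comm_subgroup G (carrier G) (kernel G H h)"
      by (rule pow_defect_pow_schur_e_in_comm_subgroup_kernel)
  qed
qed

theorem theorem1:
  fixes n :: nat and G :: "('g, 'c) monoid_scheme"
  assumes "n \<ge> 2" and "group G" and "finite (carrier G)"
    and "group_exponent G = n"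
  shows "group_exponent (schur_multiplier G) dvd n * schur_e n"
  \<comment> \<open>The bound holds for every \<open>n\<close>.\<close>
proof -
  interpret G: group G by (rule assms(2))
  interpret presentation: group_hom "free_group (carrier G)" G "free_lift G id"
    by (rule group_hom_free_lift) auto
  have "g [^]\<^bsub>G\<^esub> n = \<one>\<^bsub>G\<^esub>" if "g \<in> carrier G" for g
    using G.group_exponent_dvd_iff[of n] assms(4) that by simp
  then show ?thesis
    unfolding schur_multiplier_def
    by (rule presentation.group_exponent_hopf_multiplier_kernel_dvd[OF assms(3)])
qed

end
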